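(* Let $P$ be a simple product rule with parameters $\alpha,\beta,\gamma\in\mathbb Q$ (so $P\approx\alpha xy+\beta(x\dot y+\dot xy)+\gamma\dot x\dot y$ and $\alpha\gamma=\beta(\beta-1)$), and let $*$ be the $P$-product. Then there exists a series $\mathbb 1$ with $f*\mathbb 1=\mathbb 1*f=f$ for all series $f$ if and only if $(\beta,\gamma)\neq(0,0)$. Moreover, when $(\beta,\gamma)\neq(0,0)$ there is $\eta\in\mathbb Q$ such that the unique series $\mathbb 1$ with $\mathbb 1_\varepsilon=1$ and $\delta_a\mathbb 1=\eta\cdot\mathbb 1$ for all $a\in\Sigma$ is such a multiplicative identity.
   Context: Let $\Sigma$ be a finite alphabet, $\Sigma^*$ the set of finite words with empty word $\varepsilon$. A series is a function $f:\Sigma^*\to\mathbb Q$; write $f_w=f(w)$; series form a $\mathbb Q$-vector space under pointwise operations. For $a\in\Sigma$ the left derivative $\delta_af$ is the series $w\mapsto f(aw)$. Terms over variables $X$: generated by $u,v::=x\mid 0\mid c\cdot u\mid u+v\mid u*v$ ($c\in\mathbb Q$); $uv$ abbreviates $u*v$. A product rule is a term $P$ over $\{x,\dot x,y,\dot y\}$. The $P$-product $*$ of series and the semantics $[\![u]\!]_\varrho$ of terms under valuations $\varrho:X\to$ series are the unique pair with $(f*g)_\varepsilon=f_\varepsilon g_\varepsilon$, $\delta_a(f*g)=[\![P]\!]_{[x\mapsto f,\dot x\mapsto\delta_af,y\mapsto g,\dot y\mapsto\delta_ag]}$, and $[\![\cdot]\!]_\varrho$ interpreting variables by $\varrho$ and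 $0,c\cdot,+,*$ by the zero series, scalar multiplication, addition and $*$. $u\approx v$ means $u,v$ denote the same commutative polynomial. $P$ is simple if there are $\alpha,\beta,\gamma\in\mathbb Q$ with $\alpha\gamma=\beta(\beta-1)$ and $P\approx\alpha xy+\beta(x\dot y+\dot xy)+\gamma\dot x\dot y$. *)

theory Defs
  imports Complex_Main "HOL-Library.Poly_Mapping"
begin

type_synonym 'a series = "'a list \<Rightarrow> rat"

definition lderiv :: "'a \<Rightarrow> 'a series \<Rightarrow> 'a series" where
  "lderiv a f = (\<lambda>w. f (a # w))"

datatype 'v trm = Var 'v | Zero | Scal rat "'v trm" | Plus "'v trm" "'v trm" | Times "'v trm" "'v trm"

datatype pvar = X | Xd | Y | Yd

primrec sem :: "('a series \<Rightarrow> 'a series \<Rightarrow> 'a series) \<Rightarrow> ('v \<Rightarrow> 'a series) \<Rightarrow> 'v trm \<Rightarrow> 'a series" where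
  "sem m \<rho> (Var v) = \<rho> v"
| "sem m \<rho> Zero = (\<lambda>w. 0)"
| "sem m \<rho> (Scal c u) = (\<lambda>w. c * sem m \<rho> u w)"
| "sem m \<rho> (Plus u v) = (\<lambda>w. sem m \<rho> u w + sem m \<rho> v w)"
| "sem m \<rho> (Times u v) = m (sem m \<rho> u) (sem m \<rho> v)"

fun rule_val :: "'a series \<Rightarrow> 'a series \<Rightarrow> 'a \<Rightarrow> pvar \<Rightarrow> 'a series" where
  "rule_val f g a X = f"
| "rule_val f g a Xd = lderiv a f"
| "rule_val f g a Y = g"
| "rule_val f g a Yd = lderiv a g"

text \<open>mul is the P-product: it satisfies the defining equations (these determine it uniquely).\<close>
definition is_P_product :: "pvar trm \<Rightarrow> ('a series \<Rightarrow> 'a series \<Rightarrow> 'a series) \<Rightarrow> bool" where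
  "is_P_product P mul \<longleftrightarrow>
     (\<forall>f g. mul f g [] = f [] * g []) \<and>
     (\<forall>f g a. lderiv a (mul f g) = sem mul (rule_val f g a) P)"

primrec to_poly :: "'v trm \<Rightarrow> ('v \<Rightarrow>\<^sub>0 nat) \<Rightarrow>\<^sub>0 rat" where
  "to_poly (Var v) = Poly_Mapping.single (Poly_Mapping.single v 1) 1"
| "to_poly Zero = 0"
| "to_poly (Scal c u) = Poly_Mapping.single 0 c * to_poly u"
| "to_poly (Plus u v) = to_poly u + to_poly v"
| "to_poly (Times u v) = to_poly u * to_poly v"

definition poly_equiv :: "'v trm \<Rightarrow> 'v trm \<Rightarrow> bool" (infix "\<approx>" 50) where
  "u \<approx> v \<longleftrightarrow> to_poly u = to_poly v"

definition simple_rule :: "rat \<Rightarrow> rat \<Rightarrow> rat \<Rightarrow> pvar trm" where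
  "simple_rule \<alpha> \<beta> \<gamma> =
     Plus (Plus (Scal \<alpha> (Times (Var X) (Var Y)))
                (Scal \<beta> (Plus (Times (Var X) (Var Yd)) (Times (Var Xd) (Var Y)))))
          (Scal \<gamma> (Times (Var Xd) (Var Yd)))"

definition is_simple :: "pvar trm \<Rightarrow> bool" where
  "is_simple P \<longleftrightarrow> (\<exists>\<alpha> \<beta> \<gamma>. \<alpha> * \<gamma> = \<beta> * (\<beta> - 1) \<and> P \<approx> simple_rule \<alpha> \<beta> \<gamma>)"

end

theory Submission
  imports Defs "HOL-Library.Function_Algebras" "HOL-Library.Multiset" "HOL-Library.Product_Plus"
begin

text \<open>Write \<open>S(M; f, f', g, g') = \<alpha> M f g + \<beta> (M f g' + M f' g) + \<gamma> M f' g'\<close>. The defining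
  equation of the \<open>P\<close>-product only gives \<open>\<delta>\<^sub>a (f * g) = \<lbrakk>P\<rbrakk>\<close>, and \<open>P\<close> agrees with the simple rule
  only as a commutative polynomial, so \<open>*\<close> must be known to be a commutative algebra before \<open>\<lbrakk>P\<rbrakk>\<close>
  may be replaced by \<open>S(*; f, \<delta>\<^sub>a f, g, \<delta>\<^sub>a g)\<close>. The algebra laws are proved by induction on the
  length of words: if they hold on words of length at most \<open>n\<close>, the product truncated to these
  words is a genuine commutative algebra, in which terms evaluate like polynomials; and in every
  commutative algebra the product \<open>(f, f') (g, g') = (f g, S(f, f', g, g'))\<close> is commutative,
  bilinear and, precisely because \<open>\<alpha> \<gamma> = \<beta> (\<beta> - 1)\<close>, associative, which yields the laws on
  words of length \<open>n + 1\<close>.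

  Once \<open>\<delta>\<^sub>a (f * g) = S(*; f, \<delta>\<^sub>a f, g, \<delta>\<^sub>a g)\<close> is known, a series with \<open>\<one>\<^sub>\<epsilon> = 1\<close> and
  \<open>\<delta>\<^sub>a \<one> = \<eta> \<one>\<close> satisfies \<open>\<delta>\<^sub>a (f * \<one>) = (\<alpha> + \<beta> \<eta>) (f * \<one>) + (\<beta> + \<gamma> \<eta>) (\<delta>\<^sub>a f * \<one>)\<close>, so
  \<open>f * \<one> = f\<close> as soon as \<open>\<alpha> + \<beta> \<eta> = 0\<close> and \<open>\<beta> + \<gamma> \<eta> = 1\<close>, which is solvable iff
  \<open>(\<beta>, \<gamma>) \<noteq> (0, 0)\<close>. If \<open>\<beta> = \<gamma> = 0\<close>, then \<open>(f * g)\<^sub>a = \<alpha> f\<^sub>\<epsilon> g\<^sub>\<epsilon>\<close>, and no right unit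
  fixes the indicator of the word \<open>a\<close>.\<close>

definition scale :: "rat \<Rightarrow> 'a series \<Rightarrow> 'a series" where
  "scale c f = (\<lambda>w. c * f w)"

lemma scale_apply [simp]: "scale c f w = c * f w"
  by (simp add: scale_def)

lemma scale_zero_left [simp]: "scale 0 f = 0"
  and scale_zero_right [simp]: "scale c 0 = 0"
  and scale_one [simp]: "scale 1 f = f"
  and scale_scale [simp]: "scale c (scale d f) = scale (c * d) f"
  by (simp_all add: fun_eq_iff)

lemma scale_add_left: "scale (c + d) f = scale c f + scale d f"
  and scale_add_right: "scale c (f + g) = scale c f + scale c g"
  by (simp_all add: fun_eq_iff algebra_simps)

lemma lderiv_add: "lderiv a (f + g) = lderiv a f + lderiv a g"
  and lderiv_scale: "lderiv a (scale c f) = scale c (lderiv a f)"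
  by (simp_all add: lderiv_def fun_eq_iff)

section \<open>Evaluating polynomials in a commutative algebra of series\<close>

lemma poly_mapping_sum_single:
  "p = (\<Sum>m\<in>Poly_Mapping.keys p. Poly_Mapping.single m (Poly_Mapping.lookup p m))"
  by (rule poly_mapping_eqI) (simp add: lookup_sum lookup_single when_def in_keys_iff)

definition monomial_mset :: "('v \<Rightarrow>\<^sub>0 nat) \<Rightarrow> 'v multiset" where
  "monomial_mset m = Abs_multiset (Poly_Mapping.lookup m)"

lemma count_monomial_mset [simp]: "count (monomial_mset m) v = Poly_Mapping.lookup m v"
  unfolding monomial_mset_def by (subst count_Abs_multiset) simp_all

lemma monomial_mset_add: "monomial_mset (m + m') = monomial_mset m + monomial_mset m'"
  by (rule multiset_eqI) (simp add: lookup_add)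

lemma monomial_mset_single: "monomial_mset (Poly_Mapping.single v 1) = {#v#}"
  by (rule multiset_eqI) (simp add: lookup_single when_def)

lemma monomial_mset_zero: "monomial_mset 0 = {#}"
  by (rule multiset_eqI) simp

locale comm_series_algebra =
  fixes M :: "'a series \<Rightarrow> 'a series \<Rightarrow> 'a series"
  assumes commute: "M f g = M g f"
    and assoc: "M (M f g) h = M f (M g h)"
    and add_left: "M (f + g) h = M f h + M g h"
    and scale_left: "M (scale c f) g = scale c (M f g)"
begin

lemma add_right: "M f (g + h) = M f g + M f h"
  using add_left commute by metis

lemma scale_right: "M f (scale c g) = scale c (M f g)"
  using scale_left commute by metis

lemma zero_left [simp]: "M 0 g = 0"
  using scale_left[of 0 0 g] by simp

lemma zero_right [simp]: "M f 0 = 0"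
  using zero_left commute by metis

lemmas distribs = add_left add_right scale_left scale_right

text \<open>Adjoining a unit: \<open>(c, f)\<close> stands for \<open>c \<cdot> 1 + f\<close>. In the resulting commutative monoid
  a monomial can be evaluated as a product over a multiset.\<close>

fun unit_mult :: "rat \<times> 'a series \<Rightarrow> rat \<times> 'a series \<Rightarrow> rat \<times> 'a series" where
  "unit_mult (c, f) (d, g) = (c * d, scale c g + scale d f + M f g)"

lemma unit_mult_add_left: "unit_mult (x + y) z = unit_mult x z + unit_mult y z"
  by (cases x; cases y; cases z) (simp add: distribs scale_add_left scale_add_right algebra_simps)

lemma unit_mult_zero_left [simp]: "unit_mult 0 z = 0"
  and unit_mult_zero_right [simp]: "unit_mult z 0 = 0"
  by (cases z; simp add: zero_prod_def)+

sublocale unitalization: comm_monoid_mset unit_mult "(1, 0)"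
proof
  fix x y z :: "rat \<times> 'a series"
  show "unit_mult (unit_mult x y) z = unit_mult x (unit_mult y z)"
    by (cases x; cases y; cases z)
      (simp add: distribs assoc scale_add_right algebra_simps)
  show "unit_mult x y = unit_mult y x"
    by (cases x; cases y) (simp add: commute algebra_simps)
  show "unit_mult x (1, 0) = x"
    by (cases x) simp
qed

lemma unit_mult_add_right: "unit_mult x (y + z) = unit_mult x y + unit_mult x z"
  by (cases x; cases y; cases z) (simp add: distribs scale_add_left scale_add_right algebra_simps)

lemma unit_mult_sum_left: "unit_mult (sum F I) y = (\<Sum>i\<in>I. unit_mult (F i) y)"
  using sum_comp_morphism[of "\<lambda>x. unit_mult x y" F I] by (simp add: unit_mult_add_left o_def)

lemma unit_mult_sum_right: "unit_mult x (sum F I) = (\<Sum>i\<in>I. unit_mult x (F i))"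
  using sum_comp_morphism[of "unit_mult x" F I] by (simp add: unit_mult_add_right o_def)

lemma unit_mult_scalars:
  "unit_mult (c * d, 0) (unit_mult x y) = unit_mult (unit_mult (c, 0) x) (unit_mult (d, 0) y)"
  by (cases x; cases y) (simp add: distribs scale_add_right algebra_simps)

definition eval_monomial :: "('v \<Rightarrow> 'a series) \<Rightarrow> ('v \<Rightarrow>\<^sub>0 nat) \<Rightarrow> rat \<times> 'a series" where
  "eval_monomial \<rho> m = unitalization.F (image_mset (\<lambda>v. (0, \<rho> v)) (monomial_mset m))"

definition eval_poly ::
    "('v \<Rightarrow> 'a series) \<Rightarrow> (('v \<Rightarrow>\<^sub>0 nat) \<Rightarrow>\<^sub>0 rat) \<Rightarrow> rat \<times> 'a series" where
  "eval_poly \<rho> p =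
     (\<Sum>m\<in>Poly_Mapping.keys p. unit_mult (Poly_Mapping.lookup p m, 0) (eval_monomial \<rho> m))"

lemma eval_monomial_add:
  "eval_monomial \<rho> (m + m') = unit_mult (eval_monomial \<rho> m) (eval_monomial \<rho> m')"
  by (simp add: eval_monomial_def monomial_mset_add)

lemma eval_monomial_single: "eval_monomial \<rho> (Poly_Mapping.single v 1) = (0, \<rho> v)"
  by (simp only: eval_monomial_def monomial_mset_single) simp

lemma eval_monomial_zero: "eval_monomial \<rho> 0 = (1, 0)"
  by (simp add: eval_monomial_def monomial_mset_zero)

lemma eval_poly_zero [simp]: "eval_poly \<rho> 0 = 0"
  by (simp add: eval_poly_def)

lemma eval_poly_add: "eval_poly \<rho> (p + q) = eval_poly \<rho> p + eval_poly \<rho> q"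
proof -
  have "unit_mult (c + d, 0) x = unit_mult (c, 0) x + unit_mult (d, 0) x" for c d x
    using unit_mult_add_left[of "(c, 0)" "(d, 0)" x] by simp
  moreover have "unit_mult (0, 0) x = 0" for x
    by (simp flip: zero_prod_def)
  ultimately show ?thesis
    unfolding eval_poly_def
    by (intro setsum_keys_plus_distrib[where f = "\<lambda>m c. unit_mult (c, 0) (eval_monomial \<rho> m)"])
qed

lemma eval_poly_sum: "eval_poly \<rho> (sum p I) = (\<Sum>i\<in>I. eval_poly \<rho> (p i))"
  using sum_comp_morphism[of "eval_poly \<rho>" p I] by (simp add: eval_poly_add o_def)

lemma eval_poly_single:
  "eval_poly \<rho> (Poly_Mapping.single m c) = unit_mult (c, 0) (eval_monomial \<rho> m)"
  by (cases "c = 0") (simp_all add: eval_poly_def zero_prod_def[symmetric])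

lemma eval_poly_mult: "eval_poly \<rho> (p * q) = unit_mult (eval_poly \<rho> p) (eval_poly \<rho> q)"
proof -
  let ?c = "Poly_Mapping.lookup p" and ?d = "Poly_Mapping.lookup q"
  have "p * q = (\<Sum>m\<in>Poly_Mapping.keys p. Poly_Mapping.single m (?c m)) *
                (\<Sum>m'\<in>Poly_Mapping.keys q. Poly_Mapping.single m' (?d m'))"
    by (simp only: poly_mapping_sum_single[symmetric])
  also have "\<dots> = (\<Sum>m\<in>Poly_Mapping.keys p. \<Sum>m'\<in>Poly_Mapping.keys q.
      Poly_Mapping.single (m + m') (?c m * ?d m'))"
    by (simp only: sum_product mult_single)
  finally have "eval_poly \<rho> (p * q) = (\<Sum>m\<in>Poly_Mapping.keys p. \<Sum>m'\<in>Poly_Mapping.keys q.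
      unit_mult (?c m * ?d m', 0) (eval_monomial \<rho> (m + m')))"
    by (simp add: eval_poly_sum eval_poly_single)
  also have "\<dots> = (\<Sum>m\<in>Poly_Mapping.keys p. \<Sum>m'\<in>Poly_Mapping.keys q.
      unit_mult (unit_mult (?c m, 0) (eval_monomial \<rho> m)) (unit_mult (?d m', 0) (eval_monomial \<rho> m')))"
    by (simp add: eval_monomial_add unit_mult_scalars)
  also have "\<dots> = unit_mult (eval_poly \<rho> p) (eval_poly \<rho> q)"
    by (simp add: eval_poly_def unit_mult_sum_left unit_mult_sum_right) (rule sum.swap)
  finally show ?thesis .
qed

lemma sem_eq_eval_poly: "(0, sem M \<rho> t) = eval_poly \<rho> (to_poly t)"
proof (induction t)
  case (Var v)
  show ?case
    by (simp only: to_poly.simps sem.simps eval_poly_single eval_monomial_single) simp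
next
  case Zero
  show ?case by (simp add: zero_prod_def zero_fun_def)
next
  case (Scal c u)
  have "sem M \<rho> (Scal c u) = scale c (sem M \<rho> u)"
    by (simp add: scale_def)
  then show ?case
    by (simp add: eval_poly_mult eval_poly_single eval_monomial_zero Scal.IH[symmetric])
next
  case (Plus u v)
  have "sem M \<rho> (Plus u v) = sem M \<rho> u + sem M \<rho> v"
    by (simp add: plus_fun_def)
  then show ?case
    by (simp add: eval_poly_add Plus.IH[symmetric])
next
  case (Times u v)
  then show ?case
    by (simp add: eval_poly_mult Times.IH[symmetric])
qed

lemma sem_cong_poly_equiv: "u \<approx> v \<Longrightarrow> sem M \<rho> u = sem M \<rho> v"
  using sem_eq_eval_poly[of \<rho> u] sem_eq_eval_poly[of \<rho> v]
  unfolding poly_equiv_def by (metis prod.inject)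

end

section \<open>The simple expansion\<close>

definition simple_expansion ::
    "rat \<Rightarrow> rat \<Rightarrow> rat \<Rightarrow> ('a series \<Rightarrow> 'a series \<Rightarrow> 'a series) \<Rightarrow>
     'a series \<Rightarrow> 'a series \<Rightarrow> 'a series \<Rightarrow> 'a series \<Rightarrow> 'a series" where
  "simple_expansion \<alpha> \<beta> \<gamma> M f f' g g' =
     scale \<alpha> (M f g) + scale \<beta> (M f g' + M f' g) + scale \<gamma> (M f' g')"

lemma sem_simple_rule:
  "sem M (rule_val f g a) (simple_rule \<alpha> \<beta> \<gamma>) =
   simple_expansion \<alpha> \<beta> \<gamma> M f (lderiv a f) g (lderiv a g)"
  by (simp add: simple_rule_def simple_expansion_def fun_eq_iff)

context comm_series_algebra
begin

lemma simple_expansion_commute: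
  "simple_expansion \<alpha> \<beta> \<gamma> M f f' g g' = simple_expansion \<alpha> \<beta> \<gamma> M g g' f f'"
  by (simp add: simple_expansion_def commute add.commute)

lemma simple_expansion_add_left:
  "simple_expansion \<alpha> \<beta> \<gamma> M (f\<^sub>1 + f\<^sub>2) (f\<^sub>1' + f\<^sub>2') g g' =
   simple_expansion \<alpha> \<beta> \<gamma> M f\<^sub>1 f\<^sub>1' g g' + simple_expansion \<alpha> \<beta> \<gamma> M f\<^sub>2 f\<^sub>2' g g'"
  by (simp add: simple_expansion_def add_left add_right scale_add_right algebra_simps)

lemma simple_expansion_scale_left:
  "simple_expansion \<alpha> \<beta> \<gamma> M (scale c f) (scale c f') g g' =
   scale c (simple_expansion \<alpha> \<beta> \<gamma> M f f' g g')"
  by (simp add: simple_expansion_def scale_left scale_right scale_add_right mult.commute)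

lemma simple_expansion_assoc:
  assumes "\<alpha> * \<gamma> = \<beta> * (\<beta> - 1)"
  shows "simple_expansion \<alpha> \<beta> \<gamma> M (M f g) (simple_expansion \<alpha> \<beta> \<gamma> M f f' g g') h h' =
         simple_expansion \<alpha> \<beta> \<gamma> M f f' (M g h) (simple_expansion \<alpha> \<beta> \<gamma> M g g' h h')"
proof -
  have relation: "\<alpha> * (\<gamma> * x) = \<beta> * (\<beta> * x) - \<beta> * x" for x :: rat
    using assms by (simp add: mult.assoc[symmetric]) (simp add: algebra_simps)
  show ?thesis
    by (simp add: simple_expansion_def distribs assoc fun_eq_iff algebra_simps relation)
qed

end

section \<open>Agreement on short words\<close>

definition eq_upto :: "nat \<Rightarrow> 'a series \<Rightarrow> 'a series \<Rightarrow> bool" where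
  "eq_upto n f g \<longleftrightarrow> (\<forall>w. length w \<le> n \<longrightarrow> f w = g w)"

lemma eq_upto_refl [simp]: "eq_upto n f f"
  and eq_upto_sym: "eq_upto n f g \<Longrightarrow> eq_upto n g f"
  and eq_upto_trans [trans]: "eq_upto n f g \<Longrightarrow> eq_upto n g h \<Longrightarrow> eq_upto n f h"
  by (simp_all add: eq_upto_def)

lemma eq_upto_add: "eq_upto n f f' \<Longrightarrow> eq_upto n g g' \<Longrightarrow> eq_upto n (f + g) (f' + g')"
  and eq_upto_scale: "eq_upto n f f' \<Longrightarrow> eq_upto n (scale c f) (scale c f')"
  by (simp_all add: eq_upto_def)

lemma eq_upto_0: "eq_upto 0 f g \<longleftrightarrow> f [] = g []"
  by (simp add: eq_upto_def)

lemma eq_upto_Suc: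
  "eq_upto (Suc n) f g \<longleftrightarrow> f [] = g [] \<and> (\<forall>a. eq_upto n (lderiv a f) (lderiv a g))"
  unfolding eq_upto_def lderiv_def
proof safe
  fix w :: "'a list"
  assume "f [] = g []" "\<forall>a w. length w \<le> n \<longrightarrow> f (a # w) = g (a # w)" "length w \<le> Suc n"
  then show "f w = g w"
    by (cases w) auto
qed auto

lemma eq_upto_SucI:
  "f [] = g [] \<Longrightarrow> (\<And>a. eq_upto n (lderiv a f) (lderiv a g)) \<Longrightarrow> eq_upto (Suc n) f g"
  by (simp add: eq_upto_Suc)

lemma eq_upto_Suc_imp: "eq_upto (Suc n) f g \<Longrightarrow> eq_upto n f g"
  by (simp add: eq_upto_def)

lemma series_eq_if_eq_upto: "(\<And>n. eq_upto n f g) \<Longrightarrow> f = g"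
  by (auto simp: eq_upto_def fun_eq_iff)

definition truncate :: "nat \<Rightarrow> 'a series \<Rightarrow> 'a series" where
  "truncate n f = (\<lambda>w. if length w \<le> n then f w else 0)"

lemma eq_upto_truncate: "eq_upto n (truncate n f) f"
  by (simp add: eq_upto_def truncate_def)

lemma truncate_cong: "eq_upto n f g \<Longrightarrow> truncate n f = truncate n g"
  by (auto simp: eq_upto_def truncate_def)

lemma truncate_add: "truncate n (f + g) = truncate n f + truncate n g"
  and truncate_scale: "truncate n (scale c f) = scale c (truncate n f)"
  by (simp_all add: truncate_def fun_eq_iff)

lemma sem_eq_upto:
  assumes "\<And>f f' g g'. eq_upto n f f' \<Longrightarrow> eq_upto n g g' \<Longrightarrow> eq_upto n (M f g) (M' f' g')"
    and "\<And>v. eq_upto n (\<rho> v) (\<rho>' v)"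
  shows "eq_upto n (sem M \<rho> t) (sem M' \<rho>' t)"
  using assms by (induction t) (auto simp: eq_upto_def)

definition comm_algebra_upto :: "nat \<Rightarrow> ('a series \<Rightarrow> 'a series \<Rightarrow> 'a series) \<Rightarrow> bool" where
  "comm_algebra_upto n M \<longleftrightarrow>
     (\<forall>f g. eq_upto n (M f g) (M g f)) \<and>
     (\<forall>f g h. eq_upto n (M (M f g) h) (M f (M g h))) \<and>
     (\<forall>f g h. eq_upto n (M (f + g) h) (M f h + M g h)) \<and>
     (\<forall>c f g. eq_upto n (M (scale c f) g) (scale c (M f g)))"

lemma comm_series_algebra_truncate:
  assumes cong: "\<And>f f' g g'. eq_upto n f f' \<Longrightarrow> eq_upto n g g' \<Longrightarrow> eq_upto n (M f g) (M f' g')"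
    and "comm_algebra_upto n M"
  shows "comm_series_algebra (\<lambda>f g. truncate n (M f g))"
proof
  fix f g h :: "'a series" and c :: rat
  have laws: "eq_upto n (M f g) (M g f)" "eq_upto n (M (M f g) h) (M f (M g h))"
    "eq_upto n (M (f + g) h) (M f h + M g h)" "eq_upto n (M (scale c f) g) (scale c (M f g))"
    using assms(2) by (simp_all add: comm_algebra_upto_def)
  show "truncate n (M f g) = truncate n (M g f)"
    using laws(1) by (rule truncate_cong)
  have "eq_upto n (M (truncate n (M f g)) h) (M (M f g) h)"
    by (rule cong) (simp_all add: eq_upto_truncate)
  also have "eq_upto n \<dots> (M f (M g h))"
    by (fact laws(2))
  also have "eq_upto n \<dots> (M f (truncate n (M g h)))"
    by (rule cong) (simp_all add: eq_upto_truncate eq_upto_sym)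
  finally show "truncate n (M (truncate n (M f g)) h) = truncate n (M f (truncate n (M g h)))"
    by (rule truncate_cong)
  show "truncate n (M (f + g) h) = truncate n (M f h) + truncate n (M g h)"
    using truncate_cong[OF laws(3)] by (simp add: truncate_add)
  show "truncate n (M (scale c f) g) = scale c (truncate n (M f g))"
    using truncate_cong[OF laws(4)] by (simp add: truncate_scale)
qed

lemma comm_series_algebra_if_upto:
  assumes "\<And>n. comm_algebra_upto n M"
  shows "comm_series_algebra M"
  using assms by unfold_locales (auto simp: comm_algebra_upto_def intro: series_eq_if_eq_upto)

section \<open>Products defined by a product rule\<close>

lemma P_product_Nil: "is_P_product P mul \<Longrightarrow> mul f g [] = f [] * g []"
  and lderiv_P_product: "is_P_product P mul \<Longrightarrow> lderiv a (mul f g) = sem mul (rule_val f g a) P"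
  by (simp_all add: is_P_product_def)

lemma P_product_eq_upto:
  assumes "is_P_product P mul" "eq_upto n f f'" "eq_upto n g g'"
  shows "eq_upto n (mul f g) (mul f' g')"
  using assms(2,3)
proof (induction n arbitrary: f f' g g')
  case 0
  then show ?case
    by (simp add: eq_upto_0 P_product_Nil[OF assms(1)])
next
  case (Suc n)
  show ?case
  proof (rule eq_upto_SucI)
    show "mul f g [] = mul f' g' []"
      using Suc.prems by (simp add: eq_upto_Suc P_product_Nil[OF assms(1)])
    fix a
    have "eq_upto n (rule_val f g a v) (rule_val f' g' a v)" for v
      using Suc.prems by (cases v) (simp_all add: eq_upto_Suc eq_upto_Suc_imp)
    then show "eq_upto n (lderiv a (mul f g)) (lderiv a (mul f' g'))"
      unfolding lderiv_P_product[OF assms(1)] by (intro sem_eq_upto Suc.IH)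
  qed
qed

locale simple_P_product =
  fixes P :: "pvar trm" and \<alpha> \<beta> \<gamma> :: rat and mul :: "'a series \<Rightarrow> 'a series \<Rightarrow> 'a series"
  assumes simple: "\<alpha> * \<gamma> = \<beta> * (\<beta> - 1)"
    and equiv: "P \<approx> simple_rule \<alpha> \<beta> \<gamma>"
    and product: "is_P_product P mul"
begin

lemmas mul_Nil = P_product_Nil[OF product]

definition mul_trunc :: "nat \<Rightarrow> 'a series \<Rightarrow> 'a series \<Rightarrow> 'a series" where
  "mul_trunc n f g = truncate n (mul f g)"

lemma eq_upto_mul_trunc: "eq_upto n (mul f g) (mul_trunc n f g)"
  by (simp add: mul_trunc_def eq_upto_truncate eq_upto_sym)

lemma mul_trunc_cong: "eq_upto n f f' \<Longrightarrow> eq_upto n g g' \<Longrightarrow> mul_trunc n f g = mul_trunc n f' g'"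
  unfolding mul_trunc_def by (intro truncate_cong P_product_eq_upto[OF product])

lemma simple_expansion_mul_trunc_cong:
  "eq_upto n f\<^sub>1 f\<^sub>2 \<Longrightarrow> eq_upto n f\<^sub>1' f\<^sub>2' \<Longrightarrow> eq_upto n g\<^sub>1 g\<^sub>2 \<Longrightarrow> eq_upto n g\<^sub>1' g\<^sub>2' \<Longrightarrow>
   simple_expansion \<alpha> \<beta> \<gamma> (mul_trunc n) f\<^sub>1 f\<^sub>1' g\<^sub>1 g\<^sub>1' =
   simple_expansion \<alpha> \<beta> \<gamma> (mul_trunc n) f\<^sub>2 f\<^sub>2' g\<^sub>2 g\<^sub>2'"
  by (simp add: simple_expansion_def mul_trunc_cong)

lemma comm_series_algebra_mul_trunc:
  "comm_algebra_upto n mul \<Longrightarrow> comm_series_algebra (mul_trunc n)"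
  unfolding mul_trunc_def[abs_def]
  by (rule comm_series_algebra_truncate) (rule P_product_eq_upto[OF product])

lemma lderiv_mul_upto:
  assumes "comm_algebra_upto n mul"
  shows "eq_upto n (lderiv a (mul f g))
           (simple_expansion \<alpha> \<beta> \<gamma> (mul_trunc n) f (lderiv a f) g (lderiv a g))"
proof -
  interpret T: comm_series_algebra "mul_trunc n"
    using assms by (rule comm_series_algebra_mul_trunc)
  have mul_trunc_approx: "eq_upto n (mul f g) (mul_trunc n f' g')"
    if "eq_upto n f f'" "eq_upto n g g'" for f f' g g'
    using P_product_eq_upto[OF product that] eq_upto_mul_trunc by (rule eq_upto_trans)
  have "eq_upto n (lderiv a (mul f g)) (sem (mul_trunc n) (rule_val f g a) P)"
    unfolding lderiv_P_product[OF product] by (intro sem_eq_upto mul_trunc_approx) simp_all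
  also have "sem (mul_trunc n) (rule_val f g a) P =
      sem (mul_trunc n) (rule_val f g a) (simple_rule \<alpha> \<beta> \<gamma>)"
    using equiv by (rule T.sem_cong_poly_equiv)
  finally show ?thesis
    by (simp add: sem_simple_rule)
qed

lemma mul_commute_upto_Suc:
  assumes "comm_algebra_upto n mul"
  shows "eq_upto (Suc n) (mul f g) (mul g f)"
proof (rule eq_upto_SucI)
  interpret T: comm_series_algebra "mul_trunc n"
    using assms by (rule comm_series_algebra_mul_trunc)
  show "mul f g [] = mul g f []"
    by (simp add: mul_Nil)
  fix a
  have "eq_upto n (lderiv a (mul f g))
      (simple_expansion \<alpha> \<beta> \<gamma> (mul_trunc n) g (lderiv a g) f (lderiv a f))"
    using lderiv_mul_upto[OF assms] by (simp add: T.simple_expansion_commute)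
  then show "eq_upto n (lderiv a (mul f g)) (lderiv a (mul g f))"
    using lderiv_mul_upto[OF assms, THEN eq_upto_sym] by (rule eq_upto_trans)
qed

lemma mul_assoc_upto_Suc:
  assumes "comm_algebra_upto n mul"
  shows "eq_upto (Suc n) (mul (mul f g) h) (mul f (mul g h))"
proof (rule eq_upto_SucI)
  interpret T: comm_series_algebra "mul_trunc n"
    using assms by (rule comm_series_algebra_mul_trunc)
  let ?S = "simple_expansion \<alpha> \<beta> \<gamma> (mul_trunc n)"
  note D = lderiv_mul_upto[OF assms] and D' = lderiv_mul_upto[OF assms, THEN eq_upto_sym]
  show "mul (mul f g) h [] = mul f (mul g h) []"
    by (simp add: mul_Nil)
  fix a
  have "eq_upto n (lderiv a (mul (mul f g) h)) (?S (mul f g) (lderiv a (mul f g)) h (lderiv a h))"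
    by (rule D)
  also have "\<dots> = ?S (mul_trunc n f g) (?S f (lderiv a f) g (lderiv a g)) h (lderiv a h)"
    by (intro simple_expansion_mul_trunc_cong eq_upto_mul_trunc D eq_upto_refl)
  also have "\<dots> = ?S f (lderiv a f) (mul_trunc n g h) (?S g (lderiv a g) h (lderiv a h))"
    using simple by (rule T.simple_expansion_assoc)
  also have "\<dots> = ?S f (lderiv a f) (mul g h) (lderiv a (mul g h))"
    by (intro simple_expansion_mul_trunc_cong eq_upto_mul_trunc[THEN eq_upto_sym] D' eq_upto_refl)
  also have "eq_upto n \<dots> (lderiv a (mul f (mul g h)))"
    by (rule D')
  finally show "eq_upto n (lderiv a (mul (mul f g) h)) (lderiv a (mul f (mul g h)))" .
qed

lemma mul_add_upto_Suc:
  assumes "comm_algebra_upto n mul"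
  shows "eq_upto (Suc n) (mul (f + g) h) (mul f h + mul g h)"
proof (rule eq_upto_SucI)
  interpret T: comm_series_algebra "mul_trunc n"
    using assms by (rule comm_series_algebra_mul_trunc)
  let ?S = "simple_expansion \<alpha> \<beta> \<gamma> (mul_trunc n)"
  show "mul (f + g) h [] = (mul f h + mul g h) []"
    by (simp add: mul_Nil algebra_simps)
  fix a
  have "eq_upto n (lderiv a (mul (f + g) h))
      (?S f (lderiv a f) h (lderiv a h) + ?S g (lderiv a g) h (lderiv a h))"
    using lderiv_mul_upto[OF assms, of a "f + g" h]
    by (simp add: lderiv_add T.simple_expansion_add_left)
  also have "eq_upto n \<dots> (lderiv a (mul f h + mul g h))"
    unfolding lderiv_add by (intro eq_upto_add lderiv_mul_upto[OF assms, THEN eq_upto_sym])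
  finally show "eq_upto n (lderiv a (mul (f + g) h)) (lderiv a (mul f h + mul g h))" .
qed

lemma mul_scale_upto_Suc:
  assumes "comm_algebra_upto n mul"
  shows "eq_upto (Suc n) (mul (scale c f) g) (scale c (mul f g))"
proof (rule eq_upto_SucI)
  interpret T: comm_series_algebra "mul_trunc n"
    using assms by (rule comm_series_algebra_mul_trunc)
  show "mul (scale c f) g [] = scale c (mul f g) []"
    by (simp add: mul_Nil)
  fix a
  have "eq_upto n (lderiv a (mul (scale c f) g))
      (scale c (simple_expansion \<alpha> \<beta> \<gamma> (mul_trunc n) f (lderiv a f) g (lderiv a g)))"
    using lderiv_mul_upto[OF assms, of a "scale c f" g]
    by (simp add: lderiv_scale T.simple_expansion_scale_left)
  also have "eq_upto n \<dots> (lderiv a (scale c (mul f g)))"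
    unfolding lderiv_scale by (intro eq_upto_scale lderiv_mul_upto[OF assms, THEN eq_upto_sym])
  finally show "eq_upto n (lderiv a (mul (scale c f) g)) (lderiv a (scale c (mul f g)))" .
qed

lemma comm_algebra_upto_Suc: "comm_algebra_upto n mul \<Longrightarrow> comm_algebra_upto (Suc n) mul"
  using mul_commute_upto_Suc mul_assoc_upto_Suc mul_add_upto_Suc mul_scale_upto_Suc
  unfolding comm_algebra_upto_def[of "Suc n"] by blast

lemma comm_series_algebra_mul: "comm_series_algebra mul"
proof (rule comm_series_algebra_if_upto)
  fix n
  show "comm_algebra_upto n mul"
  proof (induction n)
    case 0
    show ?case
      by (simp add: comm_algebra_upto_def eq_upto_0 mul_Nil algebra_simps)
  next
    case (Suc n)
    then show ?case
      by (rule comm_algebra_upto_Suc)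
  qed
qed

sublocale mul: comm_series_algebra mul
  by (rule comm_series_algebra_mul)

lemma lderiv_mul:
  "lderiv a (mul f g) = simple_expansion \<alpha> \<beta> \<gamma> mul f (lderiv a f) g (lderiv a g)"
  unfolding lderiv_P_product[OF product] mul.sem_cong_poly_equiv[OF equiv] by (rule sem_simple_rule)

lemma mul_unit:
  assumes "\<alpha> + \<beta> * \<eta> = 0" "\<beta> + \<gamma> * \<eta> = 1"
    and "one [] = 1" "\<And>a. lderiv a one = scale \<eta> one"
  shows "mul f one = f \<and> mul one f = f"
proof -
  have lderiv_mul_one: "lderiv a (mul f one) = mul (lderiv a f) one" for a f
  proof -
    have "lderiv a (mul f one) =
        scale (\<alpha> + \<beta> * \<eta>) (mul f one) + scale (\<beta> + \<gamma> * \<eta>) (mul (lderiv a f) one)"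
      by (simp add: lderiv_mul assms(4) simple_expansion_def mul.scale_right fun_eq_iff algebra_simps)
    then show ?thesis
      using assms(1,2) by simp
  qed
  have "mul f one w = f w" for w
  proof (induction w arbitrary: f)
    case Nil
    show ?case
      by (simp add: mul_Nil assms(3))
  next
    case (Cons a w)
    have "mul f one (a # w) = mul (lderiv a f) one w"
      by (metis lderiv_def lderiv_mul_one)
    also have "\<dots> = f (a # w)"
      by (simp add: Cons.IH lderiv_def)
    finally show ?case .
  qed
  then show ?thesis
    by (simp add: fun_eq_iff mul.commute)
qed

lemma no_right_unit:
  assumes "\<beta> = 0" "\<gamma> = 0"
  shows "\<not> (\<forall>f. mul f one = f)"
proof
  assume unit: "\<forall>f. mul f one = f"
  fix a :: 'a
  define f :: "'a series" where "f = (\<lambda>w. if w = [a] then 1 else 0)"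
  have "mul f one [a] = \<alpha> * (f [] * one [])"
    using fun_cong[OF lderiv_mul[of a f one], of "[]"]
    by (simp add: assms simple_expansion_def lderiv_def mul_Nil)
  then show False
    using unit by (simp add: f_def)
qed

end

lemma unit_parameter_exists:
  fixes \<alpha> \<beta> \<gamma> :: rat
  assumes "\<alpha> * \<gamma> = \<beta> * (\<beta> - 1)" "(\<beta>, \<gamma>) \<noteq> (0, 0)"
  shows "\<exists>\<eta>. \<alpha> + \<beta> * \<eta> = 0 \<and> \<beta> + \<gamma> * \<eta> = 1"
proof (cases "\<gamma> = 0")
  case True
  then have "\<beta> = 1"
    using assms by simp
  with True show ?thesis
    by (intro exI[of _ "- \<alpha>"]) simp
next
  case False
  have "\<alpha> + \<beta> * ((1 - \<beta>) / \<gamma>) = (\<alpha> * \<gamma> - \<beta> * (\<beta> - 1)) / \<gamma>"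
    using False by (simp add: field_simps)
  with False assms(1) show ?thesis
    by (intro exI[of _ "(1 - \<beta>) / \<gamma>"]) simp
qed

theorem mainTheorem3:
  fixes P :: "pvar trm" and \<alpha> \<beta> \<gamma> :: rat
    and mul :: "('a::finite) series \<Rightarrow> 'a series \<Rightarrow> 'a series"
  assumes simple: "\<alpha> * \<gamma> = \<beta> * (\<beta> - 1)" "P \<approx> simple_rule \<alpha> \<beta> \<gamma>"
    and prod: "is_P_product P mul"
  shows "((\<exists>one. \<forall>f. mul f one = f \<and> mul one f = f) \<longleftrightarrow> (\<beta>, \<gamma>) \<noteq> (0, 0))
       \<and> ((\<beta>, \<gamma>) \<noteq> (0, 0) \<longrightarrow>
           (\<exists>\<eta>. \<forall>one. (one [] = 1 \<and> (\<forall>a. lderiv a one = (\<lambda>w. \<eta> * one w)))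
                  \<longrightarrow> (\<forall>f. mul f one = f \<and> mul one f = f)))"
proof -
  interpret simple_P_product P \<alpha> \<beta> \<gamma> mul
    using simple prod by unfold_locales
  have identity: "mul f one = f \<and> mul one f = f"
    if "\<alpha> + \<beta> * \<eta> = 0" "\<beta> + \<gamma> * \<eta> = 1" "one [] = 1"
      and "\<forall>a. lderiv a one = (\<lambda>w. \<eta> * one w)" for \<eta> one f
    using that by (intro mul_unit) (simp_all add: scale_def)
  show ?thesis
  proof (cases "(\<beta>, \<gamma>) = (0, 0)")
    case True
    then show ?thesis
      using no_right_unit by auto
  next
    case False
    then obtain \<eta> where \<eta>: "\<alpha> + \<beta> * \<eta> = 0" "\<beta> + \<gamma> * \<eta> = 1"
      using unit_parameter_exists[OF simple(1)] by blast
    have "\<forall>one. (one [] = 1 \<and> (\<forall>a. lderiv a one = (\<lambda>w. \<eta> * one w)))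
              \<longrightarrow> (\<forall>f. mul f one = f \<and> mul one f = f)"
      using identity[OF \<eta>] by blast
    moreover have "\<forall>f. mul f (\<lambda>w. \<eta> ^ length w) = f \<and> mul (\<lambda>w. \<eta> ^ length w) f = f"
      using identity[OF \<eta>, of "\<lambda>w. \<eta> ^ length w"] by (simp add: lderiv_def)
    ultimately show ?thesis
      using False by blast
  qed
qed

end
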